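(* Let $n\ge 1$ and let $Y\subseteq\mathbb{S}^{n-1}$ be a finite set with $I(Y)=\{0,\pm\alpha\}$ for some real $\alpha\neq 0$ (so $Y$ is a spherical $3$-distance set). If $|Y|>2n$, then $1/\alpha$ is an integer.
   Context: $\mathbb{S}^{n-1}$ is the unit sphere in $\mathbb{R}^n$. For $Y\subseteq\mathbb{R}^n$, $I(Y)=\{\mathbf{x}\cdot\mathbf{y}:\mathbf{x},\mathbf{y}\in Y,\ \mathbf{x}\neq\mathbf{y}\}$. *)

theory Defs
  imports "HOL-Analysis.Analysis"
begin

definition inner_products :: "'a::real_inner set \<Rightarrow> real set" where
  "inner_products Y = {x \<bullet> y | x y. x \<in> Y \<and> y \<in> Y \<and> x \<noteq> y}"

end

theory Submission
  imports Defs "Jordan_Normal_Form.Jordan_Normal_Form_Uniqueness" "Jordan_Normal_Form.Jordan_Normal_Form_Existence"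
begin

text \<open>Enumerate \<open>Y = {y\<^sub>1, \<dots>, y\<^sub>m}\<close>. The Gram matrix \<open>G = (y\<^sub>i \<bullet> y\<^sub>j)\<close> has rank at most
  \<open>n\<close>, and \<open>G / \<alpha> = S + (1/\<alpha>) I\<close> with \<open>S\<close> an integer matrix (zero diagonal, off-diagonal entries
  in \<open>{0, \<plusminus>1}\<close>). Hence \<open>-1/\<alpha>\<close> is an eigenvalue of \<open>S\<close> of geometric, and so of algebraic,
  multiplicity at least \<open>m - n > m/2\<close>, i.e. a root of the monic integer polynomial \<open>char_poly S\<close> of
  degree \<open>m\<close> with multiplicity more than half the degree. All roots of its minimal polynomial over
  \<open>\<rat>\<close> share that multiplicity, so the minimal polynomial is linear: \<open>-1/\<alpha>\<close> is a rational
  algebraic integer, hence an integer.\<close>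

interpretation of_rat_poly_hom: map_poly_inj_idom_divide_hom of_rat ..

definition minimal_rat_poly :: "'a::field_char_0 \<Rightarrow> rat poly \<Rightarrow> bool" where
  "minimal_rat_poly z q \<longleftrightarrow> q \<noteq> 0 \<and> poly (map_poly of_rat q) z = 0 \<and>
     (\<forall>g. g \<noteq> 0 \<and> poly (map_poly of_rat g) z = 0 \<longrightarrow> degree q \<le> degree g)"

lemma minimal_rat_poly_exists:
  assumes "p \<noteq> 0" and "poly (map_poly of_rat p) z = 0"
  obtains q where "minimal_rat_poly z q"
proof -
  let ?vanishes = "\<lambda>g. g \<noteq> 0 \<and> poly (map_poly of_rat g) z = 0"
  obtain q where "?vanishes q" "\<And>g. ?vanishes g \<Longrightarrow> degree q \<le> degree g"
    using ex_has_least_nat[of ?vanishes p degree] assms by blast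
  then show thesis using that unfolding minimal_rat_poly_def by blast
qed

lemma minimal_rat_poly_dvd:
  assumes q: "minimal_rat_poly z q" and g: "poly (map_poly of_rat g) z = 0"
  shows "q dvd g"
proof (rule ccontr)
  assume "\<not> q dvd g"
  then have "g mod q \<noteq> 0" by (simp add: mod_eq_0_iff_dvd)
  have "map_poly of_rat g = map_poly of_rat (g div q) * map_poly of_rat q + (map_poly of_rat (g mod q) :: 'a poly)"
    by (metis div_mult_mod_eq of_rat_poly_hom.hom_add of_rat_poly_hom.hom_mult)
  then have "poly (map_poly of_rat (g mod q)) z = 0"
    using q g unfolding minimal_rat_poly_def by simp
  moreover have "degree (g mod q) < degree q"
    using q \<open>g mod q \<noteq> 0\<close> degree_mod_less unfolding minimal_rat_poly_def by blast
  ultimately show False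
    using q \<open>g mod q \<noteq> 0\<close> unfolding minimal_rat_poly_def by (meson leD)
qed

lemma minimal_rat_poly_degree_pos:
  assumes "minimal_rat_poly z q"
  shows "degree q \<noteq> 0"
proof
  assume "degree q = 0"
  then obtain c where "q = [:c:]" by (rule degree_eq_zeroE)
  then show False using assms unfolding minimal_rat_poly_def by (auto simp: map_poly_pCons)
qed

text \<open>In characteristic zero, the minimal degree excludes a common root with the (nonzero,
  lower-degree) derivative.\<close>
lemma minimal_rat_poly_order:
  assumes q: "minimal_rat_poly z q"
  shows "Polynomial.order z (map_poly of_rat q) = 1"
proof -
  have "degree q \<noteq> 0" using q by (rule minimal_rat_poly_degree_pos)
  then have "pderiv q \<noteq> 0" and "degree (pderiv q) < degree q"
    by (simp_all add: pderiv_eq_0_iff degree_pderiv)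
  then have "poly (map_poly of_rat (pderiv q)) z \<noteq> 0"
    using q leD unfolding minimal_rat_poly_def by blast
  then have "Polynomial.order z (pderiv (map_poly of_rat q)) = 0"
    by (simp add: order_root of_rat_hom.map_poly_pderiv)
  then show ?thesis
    using q order_pderiv[of "map_poly of_rat q" z] unfolding minimal_rat_poly_def by simp
qed

lemma minimal_rat_poly_power_dvd:
  assumes q: "minimal_rat_poly z q" and "g \<noteq> 0"
  shows "q ^ Polynomial.order z (map_poly of_rat g) dvd g"
  using \<open>g \<noteq> 0\<close>
proof (induction "Polynomial.order z (map_poly of_rat g)" arbitrary: g)
  case 0
  from 0(1)[symmetric] show ?case by simp
next
  case (Suc k)
  have "map_poly of_rat g \<noteq> (0 :: 'a poly)" using Suc.prems by simp
  then have "poly (map_poly of_rat g) z = 0" using Suc.hyps(2)[symmetric] by (simp add: order_root)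
  then obtain s where g: "g = q * s" using minimal_rat_poly_dvd[OF q] by blast
  with Suc.prems have "s \<noteq> 0" "q \<noteq> 0" by auto
  then have "Polynomial.order z (map_poly of_rat g) = 1 + Polynomial.order z (map_poly of_rat s)"
    using g minimal_rat_poly_order[OF q] by (simp add: order_mult of_rat_poly_hom.hom_mult)
  then have "k = Polynomial.order z (map_poly of_rat s)" using Suc.hyps(2) by simp
  with Suc.hyps(1) \<open>s \<noteq> 0\<close> have "q ^ k dvd s" by blast
  then show ?case unfolding Suc.hyps(2)[symmetric] unfolding g by (simp add: mult_dvd_mono)
qed

lemma rational_if_root_order_gt_half_degree:
  fixes p :: "rat poly" and z :: "'a::field_char_0"
  assumes "p \<noteq> 0" and "degree p < 2 * Polynomial.order z (map_poly of_rat p)"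
  shows "z \<in> \<rat>"
proof -
  define k where "k = Polynomial.order z (map_poly of_rat p)"
  have "poly (map_poly of_rat p) z = 0"
    using assms by (metis order_root gr_implies_not0 mult_0_right)
  with assms(1) obtain q where q: "minimal_rat_poly z q" by (rule minimal_rat_poly_exists)
  have "q ^ k dvd p" unfolding k_def using q \<open>p \<noteq> 0\<close> by (rule minimal_rat_poly_power_dvd)
  then have "k * degree q \<le> degree p"
    using \<open>p \<noteq> 0\<close> q unfolding minimal_rat_poly_def
    by (metis dvd_imp_degree_le degree_power_eq mult.commute power_not_zero)
  then have "k * degree q < k * 2" using assms(2) unfolding k_def by linarith
  then have "degree q = 1" using minimal_rat_poly_degree_pos[OF q] by simp
  then obtain a b where "q = [:b, a:]" "a \<noteq> 0" by (rule degree1_coeffs)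
  then have "z = of_rat (- b / a)"
    using q unfolding minimal_rat_poly_def by (simp add: of_rat_minus of_rat_divide field_simps add_eq_0_iff)
  then show ?thesis by simp
qed

lemma int_if_root_order_gt_half_degree:
  fixes p :: "int poly" and z :: "'a::field_char_0"
  assumes "monic p" and "degree p < 2 * Polynomial.order z (of_int_poly p)"
  shows "z \<in> \<int>"
proof -
  have "p \<noteq> 0" using assms(1) by auto
  then have "poly (of_int_poly p) z = 0"
    using assms(2) by (metis order_root gr_implies_not0 mult_0_right of_int_poly_hom.hom_0_iff)
  then have "algebraic_int z" using assms(1) algebraic_int_altdef_ipoly by blast
  moreover have "z \<in> \<rat>"
    using \<open>p \<noteq> 0\<close> assms(2) rational_if_root_order_gt_half_degree[of "of_int_poly p" z]
    by (simp add: map_poly_map_poly o_def)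
  ultimately show ?thesis by (rule rational_algebraic_int_is_int)
qed

lemma kernel_dim_ge:
  assumes A: "A \<in> carrier_mat nr nc"
  shows "nc - nr \<le> kernel_dim (A :: 'a :: field mat)"
proof -
  define G where "G = gauss_jordan_single A"
  from gauss_jordan_single[OF A G_def[symmetric]]
  have G: "G \<in> carrier_mat nr nc" "row_echelon_form G" by auto
  then obtain pf where "pivot_fun G pf nc" unfolding row_echelon_form_def by auto
  then have "length (pivot_positions G) = card {i. i < nr \<and> row G i \<noteq> 0\<^sub>v nc}"
    by (rule pivot_positions(4)[OF G(1)])
  also have "\<dots> \<le> card {..<nr}" by (rule card_mono) auto
  finally show ?thesis unfolding kernel_dim_code G_def[symmetric] using A by auto
qed

lemma kernel_dim_mono:
  assumes A: "A \<in> carrier_mat nr nc" and B: "B \<in> carrier_mat nr' nc"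
    and "mat_kernel A \<subseteq> mat_kernel B"
  shows "kernel_dim (A :: 'a :: field mat) \<le> kernel_dim B"
proof -
  interpret KA: kernel nr nc A by (unfold_locales, rule A)
  interpret KB: kernel nr' nc B by (unfold_locales, rule B)
  obtain BA where BA: "finite BA" "KA.basis BA" using kernel_basis_exists[OF A] by auto
  obtain BB where "finite BB" "KB.basis BB" using kernel_basis_exists[OF B] by auto
  then have fin_dim: "KB.Ker.fin_dim" unfolding KB.Ker.fin_dim_def KB.Ker.basis_def by auto
  have sub_A: "BA \<subseteq> mat_kernel A" using BA(2) unfolding KA.Ker.basis_def by auto
  with assms(3) have sub_B: "BA \<subseteq> mat_kernel B" by auto
  have "\<not> KA.Ker.lin_dep BA" using BA(2) unfolding KA.Ker.basis_def by auto
  then have "\<not> KB.Ker.lin_dep BA"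
    using KA.lindep_same[OF sub_A] KB.lindep_same[OF sub_B] by simp
  then have "card BA \<le> KB.Ker.dim" using KB.Ker.li_le_dim(2)[OF fin_dim] sub_B by simp
  then show ?thesis using KA.Ker.dim_basis[OF BA] by simp
qed

lemma kernel_dim_mult_ge:
  assumes A: "A \<in> carrier_mat k nr" and B: "B \<in> carrier_mat nr nc"
  shows "nc - nr \<le> kernel_dim (A * B :: 'a :: field mat)"
proof -
  have "mat_kernel B \<subseteq> mat_kernel (A * B)"
  proof
    fix v assume "v \<in> mat_kernel B"
    then have v: "v \<in> carrier_vec nc" "B *\<^sub>v v = 0\<^sub>v nr" using mat_kernelD[OF B] by auto
    moreover have "A *\<^sub>v 0\<^sub>v nr = 0\<^sub>v k" using A by (intro eq_vecI) auto
    ultimately have "(A * B) *\<^sub>v v = 0\<^sub>v k" using A B by simp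
    then show "v \<in> mat_kernel (A * B)" using A B v(1) by (intro mat_kernelI) auto
  qed
  then show ?thesis
    using kernel_dim_ge[OF B] kernel_dim_mono[OF B mult_carrier_mat[OF A B]] by simp
qed

lemma kernel_dim_char_matrix_le_order:
  assumes A: "(A :: complex mat) \<in> carrier_mat n n"
  shows "kernel_dim (char_matrix A e) \<le> Polynomial.order e (char_poly A)"
proof -
  obtain as where "char_poly A = (\<Prod>a\<leftarrow>as. [:- a, 1:])" using char_poly_factorized[OF A] by auto
  then obtain n_as where jnf: "jordan_nf A n_as" using jordan_nf_exists[OF A] by auto
  have "kernel_dim (char_matrix A e) = dim_gen_eigenspace A e 1"
    using A unfolding dim_gen_eigenspace_def by simp
  also have "\<dots> = sum_list (map (min 1 \<circ> fst) (filter (\<lambda>na. snd na = e) n_as))"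
    using dim_gen_eigenspace[OF jnf] by (simp add: case_prod_beta' o_def)
  also have "\<dots> \<le> sum_list (map fst (filter (\<lambda>na. snd na = e) n_as))"
    by (rule sum_list_mono) simp
  also have "\<dots> = Polynomial.order e (char_poly A)" using jordan_nf_order[OF jnf] by simp
  finally show ?thesis .
qed

lemma gram_matrix_factorization:
  fixes ys :: "(real ^ 'n) list"
  obtains V :: "complex mat"
  where "V \<in> carrier_mat CARD('n) (length ys)"
    and "\<And>i j. i < length ys \<Longrightarrow> j < length ys \<Longrightarrow>
           (transpose_mat V * V) $$ (i, j) = of_real (ys ! i \<bullet> ys ! j)"
proof -
  obtain f :: "nat \<Rightarrow> 'n" where f: "bij_betw f {0..<CARD('n)} UNIV"
    using ex_bij_betw_nat_finite[of "UNIV :: 'n set"] by auto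
  define V where "V = mat CARD('n) (length ys) (\<lambda>(l, j). complex_of_real (ys ! j $ f l))"
  have "(transpose_mat V * V) $$ (i, j) = of_real (ys ! i \<bullet> ys ! j)"
    if "i < length ys" "j < length ys" for i j
  proof -
    have "(transpose_mat V * V) $$ (i, j) = of_real (\<Sum>l = 0..<CARD('n). ys ! i $ f l * ys ! j $ f l)"
      using that unfolding V_def by (simp add: scalar_prod_def)
    also have "\<dots> = of_real (\<Sum>k\<in>UNIV. ys ! i $ k * ys ! j $ k)"
      using sum.reindex_bij_betw[OF f, of "\<lambda>k. ys ! i $ k * ys ! j $ k"] by (intro arg_cong[where f = of_real]) simp
    also have "\<dots> = of_real (ys ! i \<bullet> ys ! j)" by (simp add: inner_vec_def)
    finally show ?thesis .
  qed
  moreover have "V \<in> carrier_mat CARD('n) (length ys)" unfolding V_def by simp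
  ultimately show thesis using that by blast
qed

lemma scaled_gram_matrix_integral:
  fixes ys :: "'a::real_inner list" and \<alpha> :: real
  assumes "set ys \<subseteq> sphere 0 1" and "distinct ys" and "\<alpha> \<noteq> 0"
    and "inner_products (set ys) \<subseteq> {0, \<alpha>, -\<alpha>}"
  obtains S :: "int mat"
  where "S \<in> carrier_mat (length ys) (length ys)"
    and "\<And>i j. i < length ys \<Longrightarrow> j < length ys \<Longrightarrow>
           of_int (S $$ (i, j)) + (if i = j then 1 / \<alpha> else 0) = 1 / \<alpha> * (ys ! i \<bullet> ys ! j)"
proof -
  let ?m = "length ys"
  define S where "S = mat ?m ?m (\<lambda>(i, j). if i = j then 0 else round ((ys ! i \<bullet> ys ! j) / \<alpha>))"
  have "of_int (S $$ (i, j)) + (if i = j then 1 / \<alpha> else 0) = 1 / \<alpha> * (ys ! i \<bullet> ys ! j)"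
    if "i < ?m" "j < ?m" for i j
  proof (cases "i = j")
    case True
    have "norm (ys ! i) = 1" using assms(1) nth_mem[OF \<open>i < ?m\<close>] by auto
    then have "ys ! i \<bullet> ys ! j = 1" using True norm_eq_1 by auto
    with True that show ?thesis unfolding S_def by simp
  next
    case False
    then have "ys ! i \<bullet> ys ! j \<in> inner_products (set ys)"
      using that assms(2) nth_eq_iff_index_eq unfolding inner_products_def by fastforce
    then have "(ys ! i \<bullet> ys ! j) / \<alpha> \<in> \<int>" using assms(3,4) by auto
    then obtain d where "(ys ! i \<bullet> ys ! j) / \<alpha> = of_int d" by (rule Ints_cases)
    with False that show ?thesis unfolding S_def by simp
  qed
  moreover have "S \<in> carrier_mat ?m ?m" unfolding S_def by simp
  ultimately show thesis using that by blast
qed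

lemma order_char_poly_ge_of_scaled_gram:
  fixes ys :: "(real ^ 'n) list" and S :: "int mat" and a c :: real
  assumes S: "S \<in> carrier_mat (length ys) (length ys)"
    and gram: "\<And>i j. i < length ys \<Longrightarrow> j < length ys \<Longrightarrow>
                 of_int (S $$ (i, j)) + (if i = j then c else 0) = a * (ys ! i \<bullet> ys ! j)"
  shows "length ys - CARD('n) \<le> Polynomial.order (- of_real c) (of_int_poly (char_poly S) :: complex poly)"
proof -
  let ?m = "length ys"
  define Sc :: "complex mat" where "Sc = map_mat of_int S"
  have Sc: "Sc \<in> carrier_mat ?m ?m" unfolding Sc_def using S by simp
  obtain V :: "complex mat" where V: "V \<in> carrier_mat CARD('n) ?m"
    and VV: "\<And>i j. i < ?m \<Longrightarrow> j < ?m \<Longrightarrow> (transpose_mat V * V) $$ (i, j) = of_real (ys ! i \<bullet> ys ! j)"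
    using gram_matrix_factorization[of ys] by blast
  have "char_matrix Sc (- of_real c) = (of_real a \<cdot>\<^sub>m transpose_mat V) * V"
  proof (rule eq_matI)
    fix i j assume "i < dim_row ((of_real a \<cdot>\<^sub>m transpose_mat V) * V)" "j < dim_col ((of_real a \<cdot>\<^sub>m transpose_mat V) * V)"
    then have ij: "i < ?m" "j < ?m" using V by auto
    have "char_matrix Sc (- of_real c) $$ (i, j) = of_real (of_int (S $$ (i, j)) + (if i = j then c else 0))"
      using ij S unfolding char_matrix_def Sc_def by auto
    also have "\<dots> = of_real a * (transpose_mat V * V) $$ (i, j)" using gram[OF ij] VV[OF ij] by simp
    also have "\<dots> = ((of_real a \<cdot>\<^sub>m transpose_mat V) * V) $$ (i, j)"
      using ij V by (simp add: mult_smult_assoc_mat[of "transpose_mat V" _ "CARD('n)" V])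
    finally show "char_matrix Sc (- of_real c) $$ (i, j) = ((of_real a \<cdot>\<^sub>m transpose_mat V) * V) $$ (i, j)" .
  qed (use V Sc in \<open>auto simp: char_matrix_def\<close>)
  then have "?m - CARD('n) \<le> kernel_dim (char_matrix Sc (- of_real c))"
    using kernel_dim_mult_ge[of "of_real a \<cdot>\<^sub>m transpose_mat V" ?m "CARD('n)" V ?m] V by simp
  also have "\<dots> \<le> Polynomial.order (- of_real c) (char_poly Sc)"
    using Sc by (rule kernel_dim_char_matrix_le_order)
  also have "char_poly Sc = of_int_poly (char_poly S)"
    unfolding Sc_def using of_int_hom.char_poly_hom[OF S] by simp
  finally show ?thesis .
qed

theorem theorem7p2:
  fixes Y :: "(real ^ 'n) set" and \<alpha> :: real
  assumes "Y \<subseteq> sphere 0 1"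
    and "finite Y"
    and "\<alpha> \<noteq> 0"
    and "inner_products Y = {0, \<alpha>, -\<alpha>}"
    and "card Y > 2 * CARD('n)"
  shows "1 / \<alpha> \<in> \<int>"
proof -
  obtain ys where ys: "distinct ys" "set ys = Y" using finite_distinct_list[OF assms(2)] by blast
  then have m: "length ys = card Y" using distinct_card by metis
  obtain S where S: "S \<in> carrier_mat (length ys) (length ys)"
    and gram: "\<And>i j. i < length ys \<Longrightarrow> j < length ys \<Longrightarrow>
                 of_int (S $$ (i, j)) + (if i = j then 1 / \<alpha> else 0) = 1 / \<alpha> * (ys ! i \<bullet> ys ! j)"
    using scaled_gram_matrix_integral[of ys \<alpha>] assms(1,3,4) ys by auto
  have "length ys - CARD('n) \<le> Polynomial.order (- of_real (1 / \<alpha>)) (of_int_poly (char_poly S) :: complex poly)"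
    using S gram by (rule order_char_poly_ge_of_scaled_gram)
  moreover have "degree (char_poly S) = length ys" and "monic (char_poly S)"
    using degree_monic_char_poly[OF S] by auto
  ultimately have "- complex_of_real (1 / \<alpha>) \<in> \<int>"
    using assms(5) m by (intro int_if_root_order_gt_half_degree[of "char_poly S"]) simp_all
  then show ?thesis by (metis minus_in_Ints_iff of_real_in_Ints_iff)
qed

end
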